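(* Let $n\ge 3$ and let $P_n(x)=x^n+a_{n-2}x^{n-2}+\cdots+a_1x+a_0$ be a real monic polynomial of degree $n$ whose coefficient of $x^{n-1}$ is zero. Put $P_{n-1}=\frac1n P_n'$ and define $R_{n-2}$ by $$P_n(x)=\frac{x}{n}P_n'(x)-R_{n-2}(x)=xP_{n-1}(x)-R_{n-2}(x).$$ Assume $P_{n-1}$ has $n-1$ distinct real roots $\alpha_1<\alpha_2<\cdots<\alpha_{n-1}$ and $R_{n-2}$ has $n-2$ distinct real roots $\beta_1<\cdots<\beta_{n-2}$. If $n$ is even, then $$\alpha_1<\beta_1<\alpha_2<\beta_2<\cdots<\alpha_{n-2}<\beta_{n-2}<\alpha_{n-1}$$ if and only if $$\max_{k\in\{1,\dots,\frac{n-2}{2}\}}R_{n-2}(\alpha_{2k})<0<\min_{k\in\{0,\dots,\frac{n-2}{2}\}}R_{n-2}(\alpha_{2k+1}).$$ If $n$ is odd, then the same interlacing holds if and only if $$\max_{k\in\{0,\dots,\frac{n-3}{2}\}}R_{n-2}(\alpha_{2k+1})<0<\min_{k\in\{1,\dots,\frac{n-1}{2}\}}R_{n-2}(\alpha_{2k}).$$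
   Context: All polynomials have real coefficients. $R_{n-2}(x)=xP_{n-1}(x)-P_n(x)=\sum_{k=0}^{n-2}\left(\tfrac{k}{n}-1\right)a_kx^k$. *)

theory Defs
  imports "HOL-Computational_Algebra.Polynomial"
begin

end

theory Submission
  imports Defs
begin

text \<open>
  Comparing top coefficients, R has degree n - 2 and leading coefficient -2 a(n-2) / n.
  Since P' / n is the product of the x - alpha i and the alpha i sum to 0, Vieta gives
  (n - 2) a(n-2) / n = -(sum of the alpha i squared) / 2 < 0. So R has positive leading
  coefficient and the sign of R(x) is (-1)^c(x), where c(x) counts the roots beta j > x.
  Interlacing says exactly that c(alpha i) = n - 1 - i. The counts c(alpha i) decrease weakly
  in i and lie in {0..n-2}; if R(alpha i) has sign (-1)^(n-1-i), consecutive counts differ in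
  parity, hence strictly decrease, which forces c(alpha i) = n - 1 - i. Splitting i by parity
  turns this sign pattern into the max/min conditions.
\<close>

lemma strict_mono_on_atLeastAtMostI:
  fixes f :: "nat \<Rightarrow> 'a::order"
  assumes succ: "\<And>i. a \<le> i \<Longrightarrow> i < b \<Longrightarrow> f i < f (Suc i)"
  shows "strict_mono_on {a..b} f"
proof (rule strict_mono_onI)
  fix r s assume r: "r \<in> {a..b}" and s: "s \<in> {a..b}" and "r < s"
  then have "Suc r \<le> s" by simp
  then show "f r < f s"
  proof (induction rule: dec_induct)
    case base then show ?case using r s \<open>r < s\<close> by (intro succ) auto
  next
    case (step t)
    have "f t < f (Suc t)" using r s step.hyps by (intro succ) auto
    with step.IH show ?case by (rule less_trans)
  qed
qed

lemma sgn_prod_diff: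
  fixes \<beta> :: "'a \<Rightarrow> 'b::linordered_idom"
  assumes "finite A" "x \<notin> \<beta> ` A"
  shows "sgn (\<Prod>j\<in>A. x - \<beta> j) = (-1) ^ card {j\<in>A. x < \<beta> j}"
  using assms
proof (induction A rule: finite_induct)
  case (insert a A)
  have "sgn (x - \<beta> a) = (if x < \<beta> a then -1 else 1)"
    using insert.prems by (auto simp: sgn_if)
  moreover have "{j \<in> insert a A. x < \<beta> j} = (if x < \<beta> a then insert a {j\<in>A. x < \<beta> j} else {j\<in>A. x < \<beta> j})"
    by auto
  ultimately show ?case
    using insert by (simp add: sgn_mult)
qed simp

lemma sgn_prod_diff_eq_minus_one_power_iff:
  fixes \<beta> :: "'a \<Rightarrow> 'b::linordered_idom"
  assumes "finite A"
  shows "sgn (\<Prod>j\<in>A. x - \<beta> j) = (-1) ^ k \<longleftrightarrow>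
    x \<notin> \<beta> ` A \<and> (even (card {j\<in>A. x < \<beta> j}) \<longleftrightarrow> even k)"
proof (cases "x \<in> \<beta> ` A")
  case True
  then have zero: "(\<Prod>j\<in>A. x - \<beta> j) = 0"
    using assms by auto
  show ?thesis unfolding zero using True by simp
next
  case False
  then show ?thesis
    using sgn_prod_diff[OF assms False] by (simp add: minus_one_power_iff)
qed

lemma greater_set_sorted_eq:
  fixes \<beta> :: "nat \<Rightarrow> 'a::linorder"
  assumes \<beta>: "strict_mono_on {1..m} \<beta>" and "k \<le> m"
    and bounds: "(1 \<le> k \<longrightarrow> \<beta> k \<le> x) \<and> (k < m \<longrightarrow> x < \<beta> (Suc k))"
  shows "{j\<in>{1..m}. x < \<beta> j} = {Suc k..m}"
proof (intro set_eqI iffI)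
  fix j assume j: "j \<in> {j\<in>{1..m}. x < \<beta> j}"
  have "\<not> j \<le> k"
  proof
    assume "j \<le> k"
    then have "\<beta> j \<le> \<beta> k" using j \<open>k \<le> m\<close> strict_mono_on_less_eq[OF \<beta>] by auto
    then show False using j bounds \<open>j \<le> k\<close> by auto
  qed
  then show "j \<in> {Suc k..m}" using j by auto
next
  fix j assume j: "j \<in> {Suc k..m}"
  then have "\<beta> (Suc k) \<le> \<beta> j" using strict_mono_on_less_eq[OF \<beta>] by auto
  then show "j \<in> {j\<in>{1..m}. x < \<beta> j}" using j bounds by auto
qed

lemma card_greater_sorted_eq:
  fixes \<beta> :: "nat \<Rightarrow> 'a::linorder"
  assumes \<beta>: "strict_mono_on {1..m} \<beta>" and "k \<le> m"
  shows "card {j\<in>{1..m}. x < \<beta> j} = m - k \<longleftrightarrow>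
    (1 \<le> k \<longrightarrow> \<beta> k \<le> x) \<and> (k < m \<longrightarrow> x < \<beta> (Suc k))"
proof
  assume card: "card {j\<in>{1..m}. x < \<beta> j} = m - k"
  show "(1 \<le> k \<longrightarrow> \<beta> k \<le> x) \<and> (k < m \<longrightarrow> x < \<beta> (Suc k))"
  proof safe
    assume "1 \<le> k"
    show "\<beta> k \<le> x"
    proof (rule ccontr)
      assume "\<not> \<beta> k \<le> x"
      have "{k..m} \<subseteq> {j\<in>{1..m}. x < \<beta> j}"
      proof
        fix j assume j: "j \<in> {k..m}"
        then have "\<beta> k \<le> \<beta> j" using \<open>1 \<le> k\<close> by (auto simp: strict_mono_on_less_eq[OF \<beta>])
        then show "j \<in> {j\<in>{1..m}. x < \<beta> j}" using j \<open>1 \<le> k\<close> \<open>\<not> \<beta> k \<le> x\<close> by auto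
      qed
      from card_mono[OF _ this] card \<open>k \<le> m\<close> show False by simp
    qed
  next
    assume "k < m"
    show "x < \<beta> (Suc k)"
    proof (rule ccontr)
      assume "\<not> x < \<beta> (Suc k)"
      have "{j\<in>{1..m}. x < \<beta> j} \<subseteq> {Suc (Suc k)..m}"
      proof
        fix j assume j: "j \<in> {j\<in>{1..m}. x < \<beta> j}"
        then have "\<beta> (Suc k) < \<beta> j" using \<open>\<not> x < \<beta> (Suc k)\<close> by auto
        then have "Suc k < j" using j \<open>k < m\<close> by (auto simp: strict_mono_on_less[OF \<beta>])
        then show "j \<in> {Suc (Suc k)..m}" using j by auto
      qed
      from card_mono[OF _ this] card \<open>k < m\<close> show False by simp
    qed
  qed
qed (use greater_set_sorted_eq[OF \<beta> \<open>k \<le> m\<close>] in simp)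

lemma strict_antimono_nat_interval_eq:
  fixes d :: "nat \<Rightarrow> nat"
  assumes dec: "\<And>i. 1 \<le> i \<Longrightarrow> i \<le> m \<Longrightarrow> d (Suc i) < d i" and "d 1 \<le> m"
    and "1 \<le> i" "i \<le> Suc m"
  shows "d i = Suc m - i"
proof -
  have "d i + i \<le> Suc m"
    using \<open>1 \<le> i\<close> \<open>i \<le> Suc m\<close>
  proof (induction rule: dec_induct)
    case base then show ?case using \<open>d 1 \<le> m\<close> by simp
  next
    case (step j) then show ?case using dec[of j] by simp
  qed
  moreover have "Suc m - i \<le> d i"
    using \<open>i \<le> Suc m\<close>
  proof (induction rule: inc_induct)
    case (step j) then show ?case using dec[of j] \<open>1 \<le> i\<close> by simp
  qed simp
  ultimately show ?thesis by simp
qed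

lemma interlacing_imp_notin:
  fixes \<alpha> \<beta> :: "nat \<Rightarrow> 'a::linorder"
  assumes \<alpha>: "strict_mono_on {1..Suc m} \<alpha>" and \<beta>: "strict_mono_on {1..m} \<beta>"
    and interlaced: "\<forall>i\<in>{1..m}. \<alpha> i < \<beta> i \<and> \<beta> i < \<alpha> (Suc i)"
    and i: "i \<in> {1..Suc m}"
  shows "\<alpha> i \<notin> \<beta> ` {1..m}"
proof
  assume "\<alpha> i \<in> \<beta> ` {1..m}"
  then obtain j where j: "j \<in> {1..m}" "\<alpha> i = \<beta> j" by blast
  show False
  proof (cases "i \<le> j")
    case True
    then have "\<alpha> i < \<beta> i" and "\<beta> i \<le> \<beta> j"
      using interlaced i j(1) by (auto simp: strict_mono_on_less_eq[OF \<beta>])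
    then show False using j(2) by simp
  next
    case False
    then have "\<beta> j < \<alpha> (Suc j)" and "\<alpha> (Suc j) \<le> \<alpha> i"
      using interlaced i j(1) by (auto simp: strict_mono_on_less_eq[OF \<alpha>])
    then show False using j(2) by simp
  qed
qed

lemma interlacing_iff_card_greater:
  fixes \<alpha> \<beta> :: "nat \<Rightarrow> 'a::linorder"
  assumes \<alpha>: "strict_mono_on {1..Suc m} \<alpha>" and \<beta>: "strict_mono_on {1..m} \<beta>"
  shows "(\<forall>i\<in>{1..m}. \<alpha> i < \<beta> i \<and> \<beta> i < \<alpha> (Suc i)) \<longleftrightarrow>
    (\<forall>i\<in>{1..Suc m}. \<alpha> i \<notin> \<beta> ` {1..m} \<and> card {j\<in>{1..m}. \<alpha> i < \<beta> j} = Suc m - i)"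
proof -
  have card_iff: "card {j\<in>{1..m}. \<alpha> i < \<beta> j} = Suc m - i \<longleftrightarrow>
      (2 \<le> i \<longrightarrow> \<beta> (i - 1) \<le> \<alpha> i) \<and> (i \<le> m \<longrightarrow> \<alpha> i < \<beta> i)"
    if "i \<in> {1..Suc m}" for i
    using card_greater_sorted_eq[OF \<beta>, of "i - 1" "\<alpha> i"] that by auto
  show ?thesis
  proof
    assume interlaced: "\<forall>i\<in>{1..m}. \<alpha> i < \<beta> i \<and> \<beta> i < \<alpha> (Suc i)"
    show "\<forall>i\<in>{1..Suc m}. \<alpha> i \<notin> \<beta> ` {1..m} \<and> card {j\<in>{1..m}. \<alpha> i < \<beta> j} = Suc m - i"
    proof
      fix i assume i: "i \<in> {1..Suc m}"
      have "\<beta> (i - 1) < \<alpha> i" if "2 \<le> i"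
      proof -
        have "i - 1 \<in> {1..m}" and "Suc (i - 1) = i" using that i by auto
        then show ?thesis using interlaced by metis
      qed
      then have "card {j\<in>{1..m}. \<alpha> i < \<beta> j} = Suc m - i"
        using card_iff[OF i] interlaced i by auto
      moreover have "\<alpha> i \<notin> \<beta> ` {1..m}"
        by (rule interlacing_imp_notin[OF \<alpha> \<beta> interlaced i])
      ultimately show "\<alpha> i \<notin> \<beta> ` {1..m} \<and> card {j\<in>{1..m}. \<alpha> i < \<beta> j} = Suc m - i"
        by blast
    qed
  next
    assume counts: "\<forall>i\<in>{1..Suc m}. \<alpha> i \<notin> \<beta> ` {1..m} \<and> card {j\<in>{1..m}. \<alpha> i < \<beta> j} = Suc m - i"
    show "\<forall>i\<in>{1..m}. \<alpha> i < \<beta> i \<and> \<beta> i < \<alpha> (Suc i)"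
    proof
      fix i assume i: "i \<in> {1..m}"
      have "\<alpha> i < \<beta> i" using counts card_iff[of i] i by auto
      moreover have "\<beta> i \<le> \<alpha> (Suc i)"
        using counts card_iff[of "Suc i"] i by auto
      moreover have "\<alpha> (Suc i) \<notin> \<beta> ` {1..m}"
        using counts i by simp
      then have "\<alpha> (Suc i) \<noteq> \<beta> i"
        using i by blast
      ultimately show "\<alpha> i < \<beta> i \<and> \<beta> i < \<alpha> (Suc i)" by simp
    qed
  qed
qed

lemma interlacing_iff_alternating_sgn:
  fixes \<alpha> \<beta> :: "nat \<Rightarrow> 'a::linordered_idom"
  assumes \<alpha>: "strict_mono_on {1..Suc m} \<alpha>" and \<beta>: "strict_mono_on {1..m} \<beta>"
  shows "(\<forall>i\<in>{1..m}. \<alpha> i < \<beta> i \<and> \<beta> i < \<alpha> (Suc i)) \<longleftrightarrow>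
    (\<forall>i\<in>{1..Suc m}. sgn (\<Prod>j\<in>{1..m}. \<alpha> i - \<beta> j) = (-1) ^ (Suc m - i))"
proof -
  define c where "c i = card {j\<in>{1..m}. \<alpha> i < \<beta> j}" for i
  have sgn_iff: "sgn (\<Prod>j\<in>{1..m}. \<alpha> i - \<beta> j) = (-1) ^ (Suc m - i) \<longleftrightarrow>
      \<alpha> i \<notin> \<beta> ` {1..m} \<and> (even (c i) \<longleftrightarrow> even (Suc m - i))" for i
    unfolding c_def by (rule sgn_prod_diff_eq_minus_one_power_iff) simp
  have "(\<forall>i\<in>{1..Suc m}. \<alpha> i \<notin> \<beta> ` {1..m} \<and> c i = Suc m - i) \<longleftrightarrow>
        (\<forall>i\<in>{1..Suc m}. \<alpha> i \<notin> \<beta> ` {1..m} \<and> (even (c i) \<longleftrightarrow> even (Suc m - i)))"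
  proof (intro iffI ballI)
    fix i
    assume parity: "\<forall>i\<in>{1..Suc m}. \<alpha> i \<notin> \<beta> ` {1..m} \<and> (even (c i) \<longleftrightarrow> even (Suc m - i))"
      and i: "i \<in> {1..Suc m}"
    have "c (Suc k) < c k" if k: "1 \<le> k" "k \<le> m" for k
    proof -
      have "\<alpha> k < \<alpha> (Suc k)"
        using k by (intro strict_mono_onD[OF \<alpha>]) auto
      then have "c (Suc k) \<le> c k"
        unfolding c_def by (intro card_mono) auto
      moreover have "even (c k) \<longleftrightarrow> even (Suc m - k)"
        and "even (c (Suc k)) \<longleftrightarrow> even (Suc m - Suc k)"
        using parity k by auto
      moreover have "Suc m - k = Suc (Suc m - Suc k)"
        using k by simp
      ultimately show ?thesis by (metis even_Suc le_neq_implies_less)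
    qed
    moreover have "c 1 \<le> card {1..m}"
      unfolding c_def by (rule card_mono) auto
    ultimately have "c i = Suc m - i"
      using i by (intro strict_antimono_nat_interval_eq) auto
    then show "\<alpha> i \<notin> \<beta> ` {1..m} \<and> c i = Suc m - i" using parity i by simp
  qed auto
  then show ?thesis
    using interlacing_iff_card_greater[OF \<alpha> \<beta>] sgn_iff unfolding c_def by simp
qed

lemma coeff_prod_linear_Suc:
  fixes r :: "nat \<Rightarrow> 'a::comm_ring_1"
  shows "coeff (\<Prod>i\<in>{1..Suc m}. [:-r i, 1:]) 0 = - r (Suc m) * coeff (\<Prod>i\<in>{1..m}. [:-r i, 1:]) 0"
    and "coeff (\<Prod>i\<in>{1..Suc m}. [:-r i, 1:]) (Suc k) =
      coeff (\<Prod>i\<in>{1..m}. [:-r i, 1:]) k - r (Suc m) * coeff (\<Prod>i\<in>{1..m}. [:-r i, 1:]) (Suc k)"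
  by (simp_all add: algebra_simps)

lemma degree_prod_linear_le:
  fixes r :: "nat \<Rightarrow> 'a::comm_ring_1"
  shows "degree (\<Prod>i\<in>{1..m}. [:-r i, 1:]) \<le> m"
proof (induction m)
  case (Suc m)
  then show ?case
    by (simp add: order.trans[OF degree_mult_le] del: mult_pCons_right)
qed simp

lemma coeff_prod_linear_top:
  fixes r :: "nat \<Rightarrow> 'a::comm_ring_1"
  shows "coeff (\<Prod>i\<in>{1..m}. [:-r i, 1:]) m = 1"
proof (induction m)
  case (Suc m)
  then show ?case
    using degree_prod_linear_le[of r m] unfolding coeff_prod_linear_Suc by (simp add: coeff_eq_0)
qed simp

lemma coeff_prod_linear_pred:
  fixes r :: "nat \<Rightarrow> 'a::comm_ring_1"
  shows "coeff (\<Prod>i\<in>{1..Suc m}. [:-r i, 1:]) m = - (\<Sum>i\<in>{1..Suc m}. r i)"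
proof (induction m)
  case (Suc m)
  then show ?case
    using coeff_prod_linear_top[of r "Suc m"] unfolding coeff_prod_linear_Suc by simp
qed (unfold coeff_prod_linear_Suc, simp)

lemma coeff_prod_linear_pred2:
  fixes r :: "nat \<Rightarrow> 'a::comm_ring_1"
  shows "2 * coeff (\<Prod>i\<in>{1..Suc (Suc m)}. [:-r i, 1:]) m =
    (\<Sum>i\<in>{1..Suc (Suc m)}. r i)\<^sup>2 - (\<Sum>i\<in>{1..Suc (Suc m)}. (r i)\<^sup>2)"
proof (induction m)
  case 0
  then show ?case
    unfolding coeff_prod_linear_Suc by (simp add: power2_eq_square algebra_simps)
next
  case (Suc m)
  define a where "a = r (Suc (Suc (Suc m)))"
  define s where "s = (\<Sum>i\<in>{1..Suc (Suc m)}. r i)"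
  define t where "t = (\<Sum>i\<in>{1..Suc (Suc m)}. (r i)\<^sup>2)"
  define c where "c = coeff (\<Prod>i\<in>{1..Suc (Suc m)}. [:-r i, 1:]) m"
  have "2 * coeff (\<Prod>i\<in>{1..Suc (Suc (Suc m))}. [:-r i, 1:]) (Suc m) = 2 * c + 2 * a * s"
    unfolding coeff_prod_linear_Suc(2) coeff_prod_linear_pred a_def s_def c_def
    by (simp only: mult_minus_right diff_minus_eq_add distrib_left mult.assoc)
  also have "\<dots> = (s + a)\<^sup>2 - (t + a\<^sup>2)"
    using Suc.IH[folded c_def s_def t_def] by (simp add: power2_eq_square algebra_simps)
  also have "\<dots> = (\<Sum>i\<in>{1..Suc (Suc (Suc m))}. r i)\<^sup>2 - (\<Sum>i\<in>{1..Suc (Suc (Suc m))}. (r i)\<^sup>2)"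
    by (simp add: a_def s_def t_def)
  finally show ?case .
qed

lemma poly_eq_smult_prod_linear:
  fixes p :: "'a::idom poly"
  assumes "degree p = m" "inj_on r {1..m}" "\<And>i. i \<in> {1..m} \<Longrightarrow> poly p (r i) = 0"
  shows "p = smult (lead_coeff p) (\<Prod>i\<in>{1..m}. [:-r i, 1:])"
proof (rule poly_eqI_degree_lead_coeff[where n = m and A = "r ` {1..m}"])
  show "degree (smult (lead_coeff p) (\<Prod>i\<in>{1..m}. [:-r i, 1:])) \<le> m"
    using degree_prod_linear_le[of r m] by (metis degree_smult_le order.trans)
  show "m \<le> card (r ` {1..m})"
    using card_image[OF assms(2)] by simp
  show "poly p z = poly (smult (lead_coeff p) (\<Prod>i\<in>{1..m}. [:-r i, 1:])) z"
    if "z \<in> r ` {1..m}" for z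
    using that assms(3) by (force simp: poly_prod)
qed (use assms coeff_prod_linear_top[of r m] in auto)

lemma sgn_poly_eq_sgn_prod_diff:
  fixes p :: "'a::linordered_idom poly"
  assumes "degree p = m" "0 < lead_coeff p"
    and "inj_on r {1..m}" "\<And>i. i \<in> {1..m} \<Longrightarrow> poly p (r i) = 0"
  shows "sgn (poly p x) = sgn (\<Prod>j\<in>{1..m}. x - r j)"
proof -
  define c where "c = lead_coeff p"
  have "p = smult c (\<Prod>j\<in>{1..m}. [:-r j, 1:])"
    unfolding c_def by (rule poly_eq_smult_prod_linear[OF assms(1,3,4)])
  then have "poly p x = c * (\<Prod>j\<in>{1..m}. x - r j)"
    by (simp add: poly_prod)
  then show ?thesis
    using assms(2) by (simp add: c_def sgn_mult)
qed

lemma coeff_x_mult_smult_pderiv_diff: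
  fixes p :: "'a::idom poly"
  shows "coeff ([:0, 1:] * smult c (pderiv p) - p) k = (c * of_nat k - 1) * coeff p k"
  by (cases k) (simp_all add: coeff_pderiv algebra_simps)

lemma coeff_prod_linear_pred2_neg:
  fixes r :: "nat \<Rightarrow> 'a::linordered_idom"
  assumes "(\<Sum>i\<in>{1..Suc (Suc m)}. r i) = 0" and "j \<in> {1..Suc (Suc m)}" "r j \<noteq> 0"
  shows "coeff (\<Prod>i\<in>{1..Suc (Suc m)}. [:-r i, 1:]) m < 0"
proof -
  have "0 < (\<Sum>i\<in>{1..Suc (Suc m)}. (r i)\<^sup>2)"
    using assms(2,3) by (intro sum_pos2[of _ j]) auto
  then show ?thesis
    using coeff_prod_linear_pred2[of r m] assms(1) by simp
qed

lemma coeff_neg_if_pderiv_has_distinct_roots: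
  fixes p :: "'a::linordered_field poly" and \<alpha> :: "nat \<Rightarrow> 'a"
  assumes deg: "degree p = n" and n: "n \<ge> 3" and monic: "lead_coeff p = 1"
    and centered: "coeff p (n - 1) = 0"
    and inj: "inj_on \<alpha> {1..n - 1}" and roots: "\<And>i. i \<in> {1..n - 1} \<Longrightarrow> poly (pderiv p) (\<alpha> i) = 0"
  shows "coeff p (n - 2) < 0"
proof -
  define m where "m = n - 3"
  have m: "n = Suc (Suc (Suc m))"
    using n by (simp add: m_def)
  have n_pos: "0 < (of_nat n :: 'a)"
    using n by simp
  define q where "q = smult (1 / of_nat n) (pderiv p)"
  have coeff_q: "coeff q k = of_nat (Suc k) / of_nat n * coeff p (Suc k)" for k
    by (simp add: q_def coeff_pderiv)
  have "degree q = Suc (Suc m)"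
    using deg m n_pos by (simp add: q_def degree_pderiv)
  moreover have "lead_coeff q = 1"
    using calculation coeff_q[of "Suc (Suc m)"] deg monic n_pos by (simp add: m[symmetric])
  ultimately have q_prod: "q = (\<Prod>i\<in>{1..Suc (Suc m)}. [:-\<alpha> i, 1:])"
    using poly_eq_smult_prod_linear[of q "Suc (Suc m)" \<alpha>] inj roots m by (simp add: q_def)
  have "- (\<Sum>i\<in>{1..Suc (Suc m)}. \<alpha> i) = coeff q (Suc m)"
    unfolding q_prod by (rule coeff_prod_linear_pred[symmetric])
  also have "\<dots> = 0"
    using coeff_q[of "Suc m"] centered m by simp
  finally have "(\<Sum>i\<in>{1..Suc (Suc m)}. \<alpha> i) = 0"
    by simp
  moreover obtain j where "j \<in> {1..Suc (Suc m)}" "\<alpha> j \<noteq> 0"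
  proof -
    have "\<alpha> 1 \<noteq> \<alpha> 2" using inj_onD[OF inj, of 1 2] m by auto
    then show thesis using that[of 1] that[of 2] by fastforce
  qed
  ultimately have "coeff q m < 0"
    unfolding q_prod by (rule coeff_prod_linear_pred2_neg)
  moreover have "coeff q m = of_nat (Suc m) / of_nat n * coeff p (n - 2)"
    using coeff_q[of m] m by simp
  moreover have "0 < of_nat (Suc m) / (of_nat n :: 'a)"
    by (intro divide_pos_pos n_pos) (simp del: of_nat_Suc)
  ultimately show ?thesis
    by (metis mult_less_0_iff order_less_asym)
qed

lemma degree_lead_coeff_x_smult_pderiv_diff:
  fixes p :: "'a::field_char_0 poly"
  assumes deg: "degree p = n" and n: "n \<ge> 2"
    and centered: "coeff p (n - 1) = 0" and "coeff p (n - 2) \<noteq> 0"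
  defines "r \<equiv> [:0, 1:] * smult (1 / of_nat n) (pderiv p) - p"
  shows "degree r = n - 2" and "lead_coeff r = - 2 / of_nat n * coeff p (n - 2)"
proof -
  have coeff_r: "coeff r k = (of_nat k / of_nat n - 1) * coeff p k" for k
    unfolding r_def coeff_x_mult_smult_pderiv_diff by simp
  have lead: "coeff r (n - 2) = - 2 / of_nat n * coeff p (n - 2)"
    using n by (simp add: coeff_r field_simps)
  moreover have "coeff r k = 0" if "n - 2 < k" for k
  proof -
    have "k = n - 1 \<or> k = n \<or> n < k" using that by linarith
    then show ?thesis
      using deg n centered by (auto simp: coeff_r coeff_eq_0)
  qed
  ultimately have "degree r = n - 2"
    using assms(4) n by (intro antisym degree_le le_degree) auto
  then show "degree r = n - 2" and "lead_coeff r = - 2 / of_nat n * coeff p (n - 2)"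
    using lead by simp_all
qed

lemma ball_atLeastAtMost_parity_split:
  fixes P :: "nat \<Rightarrow> bool"
  assumes "1 \<le> N"
  shows "(\<forall>i\<in>{1..N}. P i) \<longleftrightarrow>
    (\<forall>k\<in>{1..N div 2}. P (2 * k)) \<and> (\<forall>k\<in>{0..(N - 1) div 2}. P (2 * k + 1))"
proof safe
  fix i assume evens: "\<forall>k\<in>{1..N div 2}. P (2 * k)" and odds: "\<forall>k\<in>{0..(N - 1) div 2}. P (2 * k + 1)"
    and i: "i \<in> {1..N}"
  show "P i"
  proof (cases "even i")
    case True
    then obtain k where "i = 2 * k" by blast
    moreover have "k \<in> {1..N div 2}" using i calculation by auto
    ultimately show ?thesis using evens by blast
  next
    case False
    then obtain k where "i = 2 * k + 1" using oddE by blast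
    moreover have "k \<in> {0..(N - 1) div 2}" using i calculation by auto
    ultimately show ?thesis using odds by blast
  qed
qed (use assms in auto)

lemma alternating_sgn_iff_parity_split:
  fixes g :: "nat \<Rightarrow> 'a::linordered_idom"
  assumes "1 \<le> N"
  shows "(\<forall>i\<in>{1..N}. sgn (g i) = (-1) ^ (N - i)) \<longleftrightarrow>
    (\<forall>k\<in>{1..N div 2}. sgn (g (2 * k)) = (-1) ^ N) \<and>
    (\<forall>k\<in>{0..(N - 1) div 2}. sgn (g (2 * k + 1)) = - ((-1) ^ N))"
proof -
  have "(-1 :: 'a) ^ (N - 2 * k) = (-1) ^ N" if "k \<in> {1..N div 2}" for k
    using that by (auto simp: minus_one_power_iff)
  moreover have "(-1 :: 'a) ^ (N - (2 * k + 1)) = - ((-1) ^ N)" if "k \<in> {0..(N - 1) div 2}" for k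
    using that assms by (auto simp: minus_one_power_iff)
  ultimately show ?thesis
    using ball_atLeastAtMost_parity_split[OF assms, of "\<lambda>i. sgn (g i) = (-1) ^ (N - i)"] by simp
qed

theorem proposition1:
  fixes P Q R :: "real poly" and n :: nat and \<alpha> \<beta> :: "nat \<Rightarrow> real"
  assumes n3: "n \<ge> 3"
    and degP: "degree P = n" and monic: "lead_coeff P = 1"
    and coeff_n1: "coeff P (n - 1) = 0"
    and Q_def: "Q = smult (1 / real n) (pderiv P)"
    and R_def: "R = [:0, 1:] * Q - P"
    and alpha_mono: "\<And>i. 1 \<le> i \<Longrightarrow> i < n - 1 \<Longrightarrow> \<alpha> i < \<alpha> (i + 1)"
    and alpha_roots: "{x. poly Q x = 0} = \<alpha> ` {1..n - 1}"
    and beta_mono: "\<And>i. 1 \<le> i \<Longrightarrow> i < n - 2 \<Longrightarrow> \<beta> i < \<beta> (i + 1)"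
    and beta_roots: "{x. poly R x = 0} = \<beta> ` {1..n - 2}"
  shows
    "(even n \<longrightarrow>
       ((\<forall>i\<in>{1..n - 2}. \<alpha> i < \<beta> i \<and> \<beta> i < \<alpha> (i + 1)) \<longleftrightarrow>
        (Max ((\<lambda>k. poly R (\<alpha> (2 * k))) ` {1..(n - 2) div 2}) < 0 \<and>
         0 < Min ((\<lambda>k. poly R (\<alpha> (2 * k + 1))) ` {0..(n - 2) div 2})))) \<and>
     (odd n \<longrightarrow>
       ((\<forall>i\<in>{1..n - 2}. \<alpha> i < \<beta> i \<and> \<beta> i < \<alpha> (i + 1)) \<longleftrightarrow>
        (Max ((\<lambda>k. poly R (\<alpha> (2 * k + 1))) ` {0..(n - 3) div 2}) < 0 \<and>
         0 < Min ((\<lambda>k. poly R (\<alpha> (2 * k))) ` {1..(n - 1) div 2}))))"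
proof -
  define m where "m = n - 2"
  have n: "n = Suc (Suc m)"
    using n3 by (simp add: m_def)
  have \<alpha>: "strict_mono_on {1..Suc m} \<alpha>"
    using alpha_mono n by (intro strict_mono_on_atLeastAtMostI) auto
  have \<beta>: "strict_mono_on {1..m} \<beta>"
    using beta_mono n by (intro strict_mono_on_atLeastAtMostI) auto
  have "coeff P (n - 2) < 0"
    using strict_mono_on_imp_inj_on[OF \<alpha>] alpha_roots
    by (intro coeff_neg_if_pderiv_has_distinct_roots[OF degP n3 monic coeff_n1, of \<alpha>])
      (auto simp: Q_def n)
  then have degR: "degree R = m" and lcR: "lead_coeff R > 0"
    using degree_lead_coeff_x_smult_pderiv_diff[OF degP _ coeff_n1] n3
    by (auto simp: R_def Q_def n divide_less_0_iff mult_less_0_iff)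
  have "sgn (poly R x) = sgn (\<Prod>j\<in>{1..m}. x - \<beta> j)" for x
    using beta_roots
    by (intro sgn_poly_eq_sgn_prod_diff[OF degR lcR strict_mono_on_imp_inj_on[OF \<beta>]]) (auto simp: n)
  then have interlacing_iff: "(\<forall>i\<in>{1..n - 2}. \<alpha> i < \<beta> i \<and> \<beta> i < \<alpha> (i + 1)) \<longleftrightarrow>
      (\<forall>i\<in>{1..n - 1}. sgn (poly R (\<alpha> i)) = (-1) ^ (n - 1 - i))"
    using interlacing_iff_alternating_sgn[OF \<alpha> \<beta>] by (simp add: n)
  have N: "1 \<le> n - 1"
    using n3 by simp
  have even_facts: "(n - 1) div 2 = (n - 2) div 2" "(n - 1 - 1) div 2 = (n - 2) div 2"
      "1 \<le> (n - 2) div 2" "(-1::real) ^ (n - 1) = -1" if "even n"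
    using that n3 by (presburger, presburger, presburger, simp)
  have odd_facts: "(n - 1 - 1) div 2 = (n - 3) div 2" "1 \<le> (n - 1) div 2"
      "(-1::real) ^ (n - 1) = 1" if "odd n"
    using that n3 by (presburger, presburger, simp)
  show ?thesis
    unfolding interlacing_iff alternating_sgn_iff_parity_split[OF N]
    using even_facts odd_facts by (auto simp: sgn_1_neg sgn_1_pos)
qed

end
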